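(* Let $f:V_n^{(p)}\to\mathbb{F}_p$ be an $s$-plateaued function with dual $f^*$. If $f(0)=0$ and $f(x)=f(-x)$ for all $x\in V_n^{(p)}$, then $f^*(0)=0$.
   Context: Let $p$ be an odd prime, $V_n^{(p)}$ an $n$-dimensional $\mathbb{F}_p$-vector space with a non-degenerate symmetric bilinear form $\langle\cdot,\cdot\rangle_n$, $\xi_p=e^{2\pi\sqrt{-1}/p}$. For $f:V_n^{(p)}\to\mathbb{F}_p$, $\widehat{\chi_f}(\alpha)=\sum_x\xi_p^{f(x)-\langle\alpha,x\rangle_n}$; $f$ is $s$-plateaued ($0\le s\le n$) if $|\widehat{\chi_f}(\alpha)|\in\{0,p^{(n+s)/2}\}$ for all $\alpha$, with $\mathrm{Supp}(\widehat{\chi_f})$ the set where $p^{(n+s)/2}$ is attained. Let $\mu=1$ if $p^{n+s}\equiv1\pmod4$, else $\mu=\sqrt{-1}$. For $\alpha\in\mathrm{Supp}(\widehat{\chi_f})$, $\widehat{\chi_f}(\alpha)=\epsilon_\alpha\mu p^{(n+s)/2}\xi_p^{f^*(\alpha)}$ with unique $\epsilon_\alpha\in\{\pm1\}$ and $f^*(\alpha)\in\mathbb{F}_p$; $f^*:\mathrm{Supp}(\widehat{\chi_f})\to\mathbb{F}_p$ is the dual of $f$. *)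

theory Defs
  imports Complex_Main "HOL-Computational_Algebra.Primes"
begin

text \<open>The model: F_p is represented by the integers {0..<p} (arithmetic mod p);
  V_n^(p) is represented by the set of functions nat => int that take values in
  {0..<p} at indices < n and vanish elsewhere.\<close>

definition Vsp :: "int \<Rightarrow> nat \<Rightarrow> (nat \<Rightarrow> int) set" where
  "Vsp p n = {x. (\<forall>i<n. 0 \<le> x i \<and> x i < p) \<and> (\<forall>i\<ge>n. x i = 0)}"

definition vzero :: "nat \<Rightarrow> int" where
  "vzero = (\<lambda>i. 0)"

definition vneg :: "int \<Rightarrow> (nat \<Rightarrow> int) \<Rightarrow> (nat \<Rightarrow> int)" where
  "vneg p x = (\<lambda>i. (- x i) mod p)"

definition bform :: "int \<Rightarrow> nat \<Rightarrow> (nat \<Rightarrow> nat \<Rightarrow> int) \<Rightarrow> (nat \<Rightarrow> int) \<Rightarrow> (nat \<Rightarrow> int) \<Rightarrow> int" where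
  "bform p n M a x = (\<Sum>i<n. \<Sum>j<n. a i * M i j * x j) mod p"

definition symmetric_nondeg_form :: "int \<Rightarrow> nat \<Rightarrow> (nat \<Rightarrow> nat \<Rightarrow> int) \<Rightarrow> bool" where
  "symmetric_nondeg_form p n M \<longleftrightarrow>
     (\<forall>i<n. \<forall>j<n. M i j mod p = M j i mod p) \<and>
     (\<forall>a\<in>Vsp p n. (\<forall>x\<in>Vsp p n. bform p n M a x = 0) \<longrightarrow> a = vzero)"

definition xi :: "int \<Rightarrow> int \<Rightarrow> complex" where
  "xi p k = cis (2 * pi * of_int k / of_int p)"

definition walsh :: "int \<Rightarrow> nat \<Rightarrow> (nat \<Rightarrow> nat \<Rightarrow> int) \<Rightarrow> ((nat \<Rightarrow> int) \<Rightarrow> int) \<Rightarrow> (nat \<Rightarrow> int) \<Rightarrow> complex" where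
  "walsh p n M f \<alpha> = (\<Sum>x\<in>Vsp p n. xi p (f x - bform p n M \<alpha> x))"

definition plat_mag :: "int \<Rightarrow> nat \<Rightarrow> nat \<Rightarrow> real" where
  "plat_mag p n s = sqrt (of_int p) ^ (n + s)"

definition plateaued :: "int \<Rightarrow> nat \<Rightarrow> (nat \<Rightarrow> nat \<Rightarrow> int) \<Rightarrow> nat \<Rightarrow> ((nat \<Rightarrow> int) \<Rightarrow> int) \<Rightarrow> bool" where
  "plateaued p n M s f \<longleftrightarrow> s \<le> n \<and>
     (\<forall>\<alpha>\<in>Vsp p n. cmod (walsh p n M f \<alpha>) = 0 \<or> cmod (walsh p n M f \<alpha>) = plat_mag p n s)"

definition walsh_supp :: "int \<Rightarrow> nat \<Rightarrow> (nat \<Rightarrow> nat \<Rightarrow> int) \<Rightarrow> nat \<Rightarrow> ((nat \<Rightarrow> int) \<Rightarrow> int) \<Rightarrow> (nat \<Rightarrow> int) set" where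
  "walsh_supp p n M s f = {\<alpha>\<in>Vsp p n. cmod (walsh p n M f \<alpha>) = plat_mag p n s}"

definition mu :: "int \<Rightarrow> nat \<Rightarrow> nat \<Rightarrow> complex" where
  "mu p n s = (if p ^ (n + s) mod 4 = 1 then 1 else \<i>)"

definition dual :: "int \<Rightarrow> nat \<Rightarrow> (nat \<Rightarrow> nat \<Rightarrow> int) \<Rightarrow> nat \<Rightarrow> ((nat \<Rightarrow> int) \<Rightarrow> int) \<Rightarrow> (nat \<Rightarrow> int) \<Rightarrow> int" where
  "dual p n M s f \<alpha> = (THE c. 0 \<le> c \<and> c < p \<and>
     (\<exists>\<epsilon>::int. (\<epsilon> = 1 \<or> \<epsilon> = -1) \<and>
        walsh p n M f \<alpha> = of_int \<epsilon> * mu p n s * of_real (plat_mag p n s) * xi p c))"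

end

theory Submission
  imports Defs "Jordan_Normal_Form.Char_Poly"
begin

text \<open>Let \<open>\<beta>\<close> be the Walsh coefficient of \<open>f\<close> at \<open>0\<close>, an element of \<open>\<int>[\<zeta>]\<close> with
  \<open>\<zeta> = exp (2 \<pi> i / p)\<close>. Since \<open>f\<close> is even with \<open>f 0 = 0\<close>, the involution \<open>x \<mapsto> -x\<close> pairs
  up the nonzero points of every level set of \<open>f\<close>, so \<open>\<beta> = 1 + 2 w\<close> with \<open>w \<in> \<int>[\<zeta>]\<close>; in
  particular \<open>\<beta> \<noteq> 0\<close>, so \<open>\<beta> * cnj \<beta> = p ^ (n + s)\<close> by plateauedness. In \<open>\<int>[\<zeta>]\<close> the prime
  \<open>p\<close> is \<open>(1 - \<zeta>) ^ (p - 1)\<close> up to a unit, and \<open>1 - \<zeta>\<close> is a prime associated with its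
  conjugate; hence \<open>p ^ (n + s)\<close> divides \<open>\<beta>\<^sup>2\<close>, i.e. \<open>\<beta>\<^sup>2 = p ^ (n + s) * \<delta>\<close> with
  \<open>\<delta> * cnj \<delta> = 1\<close>. By Kronecker's theorem (proved via Parseval on the coefficients of \<open>\<delta>\<close>)
  \<open>\<delta> = \<plusminus>\<zeta> ^ c\<close>, and the congruence \<open>\<beta>\<^sup>2 \<equiv> 1 (mod 4)\<close> forces \<open>c = 0\<close> and fixes the sign:
  \<open>\<beta>\<^sup>2 = \<mu>\<^sup>2 p ^ (n + s)\<close>. So \<open>\<beta> = \<plusminus>\<mu> p ^ ((n + s) / 2)\<close>, which says \<open>f\<^sup>* 0 = 0\<close>.\<close>

lemma add_mod_diff_mod_cancel: "t < q \<Longrightarrow> i < (q::nat) \<Longrightarrow> ((t + i) mod q + q - i) mod q = t"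
  by (cases "t + i < q") (auto simp: mod_if)

lemma diff_mod_add_mod_cancel: "j < q \<Longrightarrow> i < (q::nat) \<Longrightarrow> ((j + q - i) mod q + i) mod q = j"
  by (cases "j < i") (auto simp: mod_if)

lemma power_mod_order:
  fixes w :: "'a :: monoid_mult"
  assumes "w ^ q = 1"
  shows "w ^ k = w ^ (k mod q)"
proof -
  have "w ^ k = w ^ (q * (k div q) + k mod q)" by simp
  also have "\<dots> = w ^ (k mod q)" by (simp only: power_add power_mult assms) simp
  finally show ?thesis .
qed

lemma geometric_sum_root_of_unity:
  fixes x :: complex
  assumes "x ^ q = 1" "x \<noteq> 1"
  shows "(\<Sum>j<q. x ^ j) = 0"
  using geometric_sum[OF assms(2), of q] assms(1) by simp

text \<open>A \<open>\<int>\<close>-combination of powers of a \<open>q\<close>-th root of unity \<open>w\<close> is an eigenvalue of an integer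
  circulant matrix (with eigenvector \<open>(w\<^sup>j)\<^sub>j\<close>), hence a root of its monic characteristic polynomial.\<close>
lemma algebraic_int_sum_root_of_unity:
  fixes w :: complex and a :: "nat \<Rightarrow> int"
  assumes q: "q > 0" and w: "w ^ q = 1"
  shows "algebraic_int (\<Sum>t<q. of_int (a t) * w ^ t)"
proof -
  define z where "z = (\<Sum>t<q. of_int (a t) * w ^ t)"
  define C where "C = mat q q (\<lambda>(i, j). a ((j + q - i) mod q))"
  define v where "v = vec q (\<lambda>j. w ^ j)"
  have C: "C \<in> carrier_mat q q" by (simp add: C_def)
  have "map_mat of_int C *\<^sub>v v = z \<cdot>\<^sub>v v"
  proof (rule eq_vecI)
    fix i assume "i < dim_vec (z \<cdot>\<^sub>v v)"
    hence i: "i < q" by (simp add: v_def)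
    have "(map_mat of_int C *\<^sub>v v) $ i = (\<Sum>j<q. of_int (a ((j + q - i) mod q)) * w ^ j)"
      using i by (simp add: C_def v_def mult_mat_vec_def scalar_prod_def atLeast0LessThan)
    also have "\<dots> = (\<Sum>t<q. of_int (a t) * w ^ ((t + i) mod q))"
      by (rule sum.reindex_bij_witness[where i="\<lambda>t. (t + i) mod q" and j="\<lambda>j. (j + q - i) mod q"])
         (use i in \<open>simp_all add: add_mod_diff_mod_cancel diff_mod_add_mod_cancel\<close>)
    also have "\<dots> = z * w ^ i"
      by (simp add: z_def sum_distrib_right power_mod_order[OF w, symmetric] power_add mult.assoc)
    finally show "(map_mat of_int C *\<^sub>v v) $ i = (z \<cdot>\<^sub>v v) $ i"
      using i by (simp add: v_def)
  qed (simp add: C_def v_def)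
  moreover have "v \<noteq> 0\<^sub>v q"
    using q by (metis index_vec index_zero_vec(1) power_0 v_def zero_neq_one)
  ultimately have "eigenvector (map_mat of_int C) v z"
    unfolding eigenvector_def using C by (auto simp: v_def)
  hence "eigenvalue (map_mat of_int C) z"
    unfolding eigenvalue_def by blast
  moreover have "map_mat of_int C \<in> carrier_mat q q"
    using C by simp
  ultimately have "poly (char_poly (map_mat of_int C)) z = 0"
    using eigenvalue_root_char_poly by blast
  hence "poly (map_poly of_int (char_poly C)) z = 0"
    by (simp add: of_int_hom.char_poly_hom[OF C])
  moreover have "lead_coeff (char_poly C) = 1"
    using degree_monic_char_poly[OF C] by simp
  ultimately show ?thesis
    unfolding z_def[symmetric] algebraic_int_altdef_ipoly by blast
qed

lemma sign_if_square_eq: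
  fixes \<beta> \<gamma> :: complex
  assumes "\<beta>\<^sup>2 = \<gamma>\<^sup>2"
  shows "\<exists>\<epsilon>::int. (\<epsilon> = 1 \<or> \<epsilon> = -1) \<and> \<beta> = of_int \<epsilon> * \<gamma>"
proof -
  have "\<beta> = \<gamma> \<or> \<beta> = - \<gamma>"
    using assms by (simp add: power2_eq_iff)
  thus ?thesis
  proof
    assume "\<beta> = \<gamma>"
    thus ?thesis by (intro exI[of _ 1]) simp
  next
    assume "\<beta> = - \<gamma>"
    thus ?thesis by (intro exI[of _ "-1"]) simp
  qed
qed

lemma int_eq_0_if_all_powers_dvd:
  fixes x q :: int
  assumes "q > 1" "\<forall>N. q ^ N dvd x"
  shows "x = 0"
proof (rule ccontr)
  assume x: "x \<noteq> 0"
  have "\<bar>q ^ nat \<bar>x\<bar>\<bar> \<le> \<bar>x\<bar>"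
    using assms(2) x dvd_imp_le_int by blast
  moreover have "int (nat \<bar>x\<bar>) < 2 ^ nat \<bar>x\<bar>"
    by (rule of_nat_less_two_power)
  moreover have "(2::int) ^ nat \<bar>x\<bar> \<le> q ^ nat \<bar>x\<bar>"
    using assms(1) by (intro power_mono) auto
  ultimately show False using assms(1) by simp
qed

lemma poly_eq_sum_lessThan:
  fixes p :: "'a :: comm_semiring_1 poly"
  assumes "degree p < n"
  shows "poly p x = (\<Sum>i<n. coeff p i * x ^ i)"
proof -
  have "poly p x = (\<Sum>i\<le>degree p. coeff p i * x ^ i)"
    by (rule poly_altdef)
  also have "\<dots> = (\<Sum>i<n. coeff p i * x ^ i)"
    by (rule sum.mono_neutral_left) (use assms in \<open>auto simp: coeff_eq_0\<close>)
  finally show ?thesis .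
qed

lemma sum_sq_pairwise_diff:
  fixes a :: "nat \<Rightarrow> int"
  shows "(\<Sum>t<q. \<Sum>u<q. (a t - a u)\<^sup>2) = 2 * (int q * (\<Sum>t<q. (a t)\<^sup>2) - (\<Sum>t<q. a t)\<^sup>2)"
proof -
  define S Q where "S = (\<Sum>t<q. a t)" and "Q = (\<Sum>t<q. (a t)\<^sup>2)"
  have "(\<Sum>t<q. \<Sum>u<q. (a t - a u)\<^sup>2) = (\<Sum>t<q. \<Sum>u<q. (a t)\<^sup>2 + (a u)\<^sup>2 - 2 * (a t * a u))"
    by (intro sum.cong refl) (simp add: power2_diff algebra_simps)
  also have "\<dots> = (\<Sum>t<q. int q * (a t)\<^sup>2 + Q - 2 * (a t * S))"
    by (simp add: sum.distrib sum_subtractf sum_distrib_left Q_def S_def)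
  also have "\<dots> = int q * Q + int q * Q - 2 * (S * S)"
    by (simp add: sum.distrib sum_subtractf sum_distrib_left sum_distrib_right Q_def S_def mult.commute)
  finally show ?thesis by (simp add: S_def Q_def power2_eq_square algebra_simps)
qed

lemma exists_entry_almost_constant:
  fixes a :: "nat \<Rightarrow> int"
  assumes "(\<Sum>t<q. \<Sum>u<q. (a t - a u)\<^sup>2) < 2 * int q"
  shows "\<exists>t0<q. card {u\<in>{..<q}. a u \<noteq> a t0} \<le> 1"
proof (rule ccontr)
  assume "\<not> ?thesis"
  hence "(\<Sum>t<q. 2) \<le> (\<Sum>t<q. int (card {u\<in>{..<q}. a u \<noteq> a t}))"
    by (intro sum_mono) auto
  also have "\<dots> = (\<Sum>t<q. \<Sum>u<q. if a u \<noteq> a t then 1 else 0)"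
    by (simp add: sum.If_cases Collect_conj_eq lessThan_def)
  also have "\<dots> \<le> (\<Sum>t<q. \<Sum>u<q. (a t - a u)\<^sup>2)"
  proof (intro sum_mono)
    fix t u
    have "a u \<noteq> a t \<Longrightarrow> 1 \<le> (a t - a u)\<^sup>2"
      by (metis abs_le_square_iff abs_one eq_iff_diff_eq_0 power_one zabs_less_one_iff not_le)
    thus "(if a u \<noteq> a t then 1 else 0) \<le> (a t - a u)\<^sup>2" by simp
  qed
  finally show False using assms by simp
qed

lemma spread_of_one_outlier:
  fixes a :: "nat \<Rightarrow> int"
  assumes c: "c < q" "\<forall>t<q. t \<noteq> c \<longrightarrow> a t = v"
  shows "int q * (\<Sum>t<q. (a t)\<^sup>2) - (\<Sum>t<q. a t)\<^sup>2 = (int q - 1) * (a c - v)\<^sup>2"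
proof -
  define d where "d = a c - v"
  define e where "e t = (if t = c then d else 0)" for t
  have a_eq: "\<forall>t<q. a t = v + e t" using c by (auto simp: e_def d_def)
  have "(\<Sum>t<q. a t) = (\<Sum>t<q. v + e t)" using a_eq by (intro sum.cong) auto
  also have "\<dots> = int q * v + d" using c(1) by (simp add: sum.distrib e_def)
  finally have S: "(\<Sum>t<q. a t) = int q * v + d" .
  have "(\<Sum>t<q. (a t)\<^sup>2) = (\<Sum>t<q. v\<^sup>2 + 2 * v * e t + (e t)\<^sup>2)"
    using a_eq by (intro sum.cong) (auto simp: power2_eq_square algebra_simps)
  also have "\<dots> = int q * v\<^sup>2 + 2 * v * (\<Sum>t<q. e t) + (\<Sum>t<q. (e t)\<^sup>2)"
    by (simp add: sum.distrib sum_distrib_left)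
  also have "(\<lambda>t. (e t)\<^sup>2) = (\<lambda>t. if t = c then d\<^sup>2 else 0)"
    by (auto simp: e_def)
  also have "(\<Sum>t<q. e t) = d"
    using c(1) by (simp add: e_def)
  also have "(\<Sum>t<q. if t = c then d\<^sup>2 else 0) = d\<^sup>2"
    using c(1) by simp
  finally have Q: "(\<Sum>t<q. (a t)\<^sup>2) = int q * v\<^sup>2 + 2 * v * d + d\<^sup>2" .
  show ?thesis
    unfolding S Q d_def[symmetric] by (simp add: power2_eq_square algebra_simps)
qed

text \<open>By \<open>sum_sq_pairwise_diff\<close> the hypothesis says \<open>\<Sum>\<^sub>t \<Sum>\<^sub>u (a t - a u)\<^sup>2 = 2 (q - 1)\<close>.\<close>
lemma one_outlier_if_spread_eq:
  fixes a :: "nat \<Rightarrow> int"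
  assumes q: "q \<ge> 2" and spread: "int q * (\<Sum>t<q. (a t)\<^sup>2) - (\<Sum>t<q. a t)\<^sup>2 = int q - 1"
  shows "\<exists>c<q. \<exists>v d. d\<^sup>2 = 1 \<and> (\<forall>t<q. t \<noteq> c \<longrightarrow> a t = v) \<and> a c = v + d"
proof -
  obtain t0 where t0: "t0 < q" "card {u\<in>{..<q}. a u \<noteq> a t0} \<le> 1"
    using exists_entry_almost_constant[of a q] spread sum_sq_pairwise_diff[of a q] by auto
  define v where "v = a t0"
  have "card {u\<in>{..<q}. a u \<noteq> v} \<noteq> 0"
  proof
    assume "card {u\<in>{..<q}. a u \<noteq> v} = 0"
    hence "\<forall>u<q. a u = v" by auto
    hence "int q - 1 = 0" using spread by (simp add: power2_eq_square)
    thus False using q by simp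
  qed
  hence "card {u\<in>{..<q}. a u \<noteq> v} = 1" using t0(2) unfolding v_def by linarith
  then obtain c where "{u\<in>{..<q}. a u \<noteq> v} = {c}"
    by (meson card_1_singletonE)
  hence c: "c < q" "\<forall>t<q. t \<noteq> c \<longrightarrow> a t = v" by auto
  have "(int q - 1) * (a c - v)\<^sup>2 = int q - 1"
    using spread spread_of_one_outlier[OF c] by simp
  hence "(a c - v)\<^sup>2 = 1" using q by simp
  thus ?thesis using c by (intro exI[of _ c] conjI exI[of _ v] exI[of _ "a c - v"]) auto
qed

lemma even_card_involution:
  assumes "finite A" "\<forall>x\<in>A. g x \<in> A \<and> g (g x) = x \<and> g x \<noteq> x"
  shows "even (card A)"
  using assms
proof (induction "card A" arbitrary: A rule: less_induct)
  case less
  show ?case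
  proof (cases "A = {}")
    case False
    then obtain x where x: "x \<in> A" by blast
    define A' where "A' = A - {x, g x}"
    have gx: "g x \<in> A" "g x \<noteq> x" "g (g x) = x" using less.prems(2) x by auto
    have sub: "{x, g x} \<subseteq> A" using x gx by simp
    have "card {x, g x} = 2" using gx by simp
    hence card_A: "card A = card A' + 2"
      using card_mono[OF less.prems(1) sub] card_Diff_subset[OF _ sub] unfolding A'_def by simp
    have "\<forall>y\<in>A'. g y \<in> A' \<and> g (g y) = y \<and> g y \<noteq> y"
    proof
      fix y assume y: "y \<in> A'"
      hence "y \<in> A" "y \<noteq> x" "y \<noteq> g x" by (auto simp: A'_def)
      hence "g y \<in> A" "g (g y) = y" "g y \<noteq> y" "g y \<noteq> x" "g y \<noteq> g x"
        using less.prems(2) gx(3) by metis+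
      thus "g y \<in> A' \<and> g (g y) = y \<and> g y \<noteq> y" by (simp add: A'_def)
    qed
    hence "even (card A')"
      using less.hyps card_A less.prems(1) by (simp add: A'_def)
    thus ?thesis using card_A by simp
  qed simp
qed

section \<open>The ring \<open>\<int>[\<zeta>]\<close> of cyclotomic integers\<close>

locale cyclotomic =
  fixes q :: nat
  assumes q_pos: "q > 0"
begin

definition zeta :: complex where
  "zeta = cis (2 * pi / real q)"

text \<open>Elements of \<open>\<int>[\<zeta>]\<close> are represented by integer coefficient vectors \<open>a\<close> indexed by
  \<open>t < q\<close>; \<open>cyc_eval j a\<close> is the image of \<open>\<Sum> a t \<zeta>\<^sup>t\<close> under the embedding \<open>\<zeta> \<mapsto> \<zeta>\<^sup>j\<close>.\<close>
definition cyc_eval :: "nat \<Rightarrow> (nat \<Rightarrow> int) \<Rightarrow> complex" where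
  "cyc_eval j a = (\<Sum>t<q. of_int (a t) * zeta ^ (j * t))"

definition cyc_int :: "complex \<Rightarrow> bool" where
  "cyc_int z \<longleftrightarrow> (\<exists>a. z = cyc_eval 1 a)"

definition cyc_dvd :: "complex \<Rightarrow> complex \<Rightarrow> bool" where
  "cyc_dvd x y \<longleftrightarrow> (\<exists>w. cyc_int w \<and> y = x * w)"

definition cyc_conv :: "(nat \<Rightarrow> int) \<Rightarrow> (nat \<Rightarrow> int) \<Rightarrow> nat \<Rightarrow> int" where
  "cyc_conv a b u = (\<Sum>t<q. a t * b ((u + q - t) mod q))"

definition cyc_reflect :: "(nat \<Rightarrow> int) \<Rightarrow> nat \<Rightarrow> int" where
  "cyc_reflect a t = a ((q - t) mod q)"

lemma zeta_pow_q: "zeta ^ q = 1"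
  unfolding zeta_def DeMoivre using q_pos by simp

lemma zeta_pow_mod: "zeta ^ k = zeta ^ (k mod q)"
  by (rule power_mod_order[OF zeta_pow_q])

lemma zeta_pow_eq_1_iff: "zeta ^ k = 1 \<longleftrightarrow> q dvd k"
proof
  assume "zeta ^ k = 1"
  hence "cos (real k * (2 * pi / real q)) = 1"
    unfolding zeta_def DeMoivre by (metis cis.sel(1) one_complex.sel(1))
  then obtain x where "real k * (2 * pi / real q) = real_of_int x * 2 * pi"
    unfolding cos_one_2pi_int by blast
  hence "real k = real_of_int x * real q" using q_pos by (simp add: field_simps)
  hence "int k = x * int q" by (metis of_int_eq_iff of_int_mult of_int_of_nat_eq)
  thus "q dvd k" by (metis dvd_triv_right int_dvd_int_iff)
next
  assume "q dvd k"
  then obtain c where "k = q * c" by blast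
  thus "zeta ^ k = 1" by (simp add: power_mult zeta_pow_q)
qed

lemma zeta_neq_0 [simp]: "zeta \<noteq> 0"
  by (simp add: zeta_def)

lemma norm_zeta_pow [simp]: "cmod (zeta ^ k) = 1"
  by (simp add: zeta_def norm_power)

lemma zeta_pow_times_cnj: "zeta ^ k * cnj (zeta ^ k) = 1"
  by (metis norm_zeta_pow complex_norm_square mult_1 of_real_1 power_one)

lemma cnj_zeta: "cnj zeta = zeta ^ (q - 1)"
proof -
  have "zeta * zeta ^ (q - 1) = 1"
    using q_pos zeta_pow_q by (metis Suc_diff_1 power_Suc)
  thus ?thesis using zeta_pow_times_cnj[of 1] zeta_neq_0 by (metis mult_left_cancel power_one_right)
qed

lemma sum_zeta_pow_eq_0:
  assumes "\<not> q dvd j"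
  shows "(\<Sum>t<q. zeta ^ (j * t)) = 0"
proof -
  have "(zeta ^ j) ^ q = 1" by (metis power_mult mult.commute zeta_pow_q power_one)
  moreover have "zeta ^ j \<noteq> 1" using zeta_pow_eq_1_iff assms by simp
  ultimately show ?thesis using geometric_sum_root_of_unity by (simp add: power_mult)
qed

lemma zeta_pow_inj:
  assumes "t < q" "s < q" "zeta ^ t = zeta ^ s"
  shows "t = s"
proof -
  have "x = y" if "x \<le> y" "y < q" "zeta ^ x = zeta ^ y" for x y
  proof -
    have "zeta ^ y = zeta ^ x * zeta ^ (y - x)" using that(1) by (metis le_add_diff_inverse power_add)
    hence "zeta ^ (y - x) = 1" using that(3) by (metis mult_cancel_left1 power_not_zero zeta_neq_0)
    hence "q dvd y - x" using zeta_pow_eq_1_iff by blast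
    thus "x = y" using that(1,2) nat_dvd_not_less[of "y - x" q] by (cases "x = y") auto
  qed
  thus ?thesis using assms by (metis nat_le_linear)
qed

lemma zeta_orthogonality:
  assumes "t < q" "s < q"
  shows "(\<Sum>j<q. zeta ^ (j * t) * cnj (zeta ^ (j * s))) = (if t = s then of_nat q else 0)"
proof -
  define x where "x = zeta ^ t * cnj (zeta ^ s)"
  have xj: "zeta ^ (j * t) * cnj (zeta ^ (j * s)) = x ^ j" for j
    by (simp add: x_def power_mult_distrib power_mult mult.commute[of j])
  show ?thesis
  proof (cases "t = s")
    case True
    hence "x = 1" using zeta_pow_times_cnj[of s] by (simp add: x_def)
    thus ?thesis using True xj by simp
  next
    case False
    have "x ^ q = (zeta ^ q) ^ t * cnj ((zeta ^ q) ^ s)"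
      by (simp add: x_def power_mult_distrib power_mult[symmetric] mult.commute)
    hence "x ^ q = 1" by (simp add: zeta_pow_q)
    moreover have "x \<noteq> 1"
    proof
      assume "x = 1"
      hence "zeta ^ t = zeta ^ s"
        using zeta_pow_times_cnj[of s] unfolding x_def by (metis mult.assoc mult.commute mult_1_right)
      thus False using zeta_pow_inj assms False by blast
    qed
    ultimately show ?thesis using geometric_sum_root_of_unity False xj by simp
  qed
qed

lemma cyc_eval_add: "cyc_eval j (\<lambda>t. a t + b t) = cyc_eval j a + cyc_eval j b"
  by (simp add: cyc_eval_def sum.distrib algebra_simps)

lemma cyc_eval_diff: "cyc_eval j (\<lambda>t. a t - b t) = cyc_eval j a - cyc_eval j b"
  by (simp add: cyc_eval_def sum_subtractf algebra_simps)

lemma cyc_eval_scale: "cyc_eval j (\<lambda>t. c * a t) = of_int c * cyc_eval j a"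
  by (simp add: cyc_eval_def sum_distrib_left algebra_simps)

lemma cyc_eval_const: "cyc_eval j (\<lambda>t. c) = of_int c * (\<Sum>t<q. zeta ^ (j * t))"
  by (simp add: cyc_eval_def sum_distrib_left)

lemma cyc_eval_single:
  assumes "k < q"
  shows "cyc_eval j (\<lambda>t. if t = k then c else 0) = of_int c * zeta ^ (j * k)"
proof -
  have "cyc_eval j (\<lambda>t. if t = k then c else 0) = (\<Sum>t<q. if t = k then of_int c * zeta ^ (j * k) else 0)"
    unfolding cyc_eval_def by (rule sum.cong) auto
  thus ?thesis using assms by simp
qed

lemma cyc_eval_0: "cyc_eval 0 a = of_int (\<Sum>t<q. a t)"
  by (simp add: cyc_eval_def)

lemma cyc_eval_conv: "cyc_eval j (cyc_conv a b) = cyc_eval j a * cyc_eval j b"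
proof -
  have shift: "(\<Sum>u<q. of_int (b ((u + q - t) mod q)) * zeta ^ (j * u)) = zeta ^ (j * t) * cyc_eval j b"
    if t: "t < q" for t
  proof -
    have "(\<Sum>u<q. of_int (b ((u + q - t) mod q)) * zeta ^ (j * u)) =
          (\<Sum>s<q. of_int (b s) * zeta ^ (j * ((s + t) mod q)))"
      by (rule sum.reindex_bij_witness[where i="\<lambda>s. (s + t) mod q" and j="\<lambda>u. (u + q - t) mod q"])
         (use t q_pos in \<open>auto simp: add_mod_diff_mod_cancel diff_mod_add_mod_cancel\<close>)
    also have "\<dots> = (\<Sum>s<q. of_int (b s) * zeta ^ (j * s) * zeta ^ (j * t))"
    proof (intro sum.cong refl)
      fix s
      have "zeta ^ (j * ((s + t) mod q)) = zeta ^ (j * (s + t))"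
        by (metis zeta_pow_mod mod_mult_right_eq)
      thus "of_int (b s) * zeta ^ (j * ((s + t) mod q)) = of_int (b s) * zeta ^ (j * s) * zeta ^ (j * t)"
        by (simp add: distrib_left power_add)
    qed
    finally show ?thesis by (simp add: cyc_eval_def sum_distrib_left mult_ac)
  qed
  have "cyc_eval j (cyc_conv a b) =
      (\<Sum>u<q. \<Sum>t<q. of_int (a t) * (of_int (b ((u + q - t) mod q)) * zeta ^ (j * u)))"
    unfolding cyc_eval_def cyc_conv_def of_int_sum of_int_mult sum_distrib_right by (simp add: mult.assoc)
  also have "\<dots> = (\<Sum>t<q. of_int (a t) * (\<Sum>u<q. of_int (b ((u + q - t) mod q)) * zeta ^ (j * u)))"
    by (subst sum.swap) (simp add: sum_distrib_left)
  also have "\<dots> = (\<Sum>t<q. of_int (a t) * zeta ^ (j * t) * cyc_eval j b)"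
    by (intro sum.cong refl) (simp add: shift mult.assoc)
  finally show ?thesis by (simp add: cyc_eval_def sum_distrib_right)
qed

lemma cyc_eval_reflect: "cyc_eval j (cyc_reflect a) = cnj (cyc_eval j a)"
proof -
  have neg: "zeta ^ (j * ((q - s) mod q)) = zeta ^ ((q - 1) * (j * s))" if s: "s < q" for s
  proof -
    have "int (j * ((q - s) mod q)) mod int q = int ((q - 1) * (j * s)) mod int q"
    proof -
      have "int ((q - s) mod q) mod int q = (- int s) mod int q"
        using s q_pos by (cases "s = 0") (auto simp: zmod_int of_nat_diff mod_diff_left_eq[symmetric])
      hence "int (j * ((q - s) mod q)) mod int q = (int j * (- int s)) mod int q"
        by (metis mod_mult_right_eq of_nat_mult zmod_int)
      also have "\<dots> = (int q * (int j * int s) - int j * int s) mod int q"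
        by (simp add: mod_diff_left_eq[symmetric])
      also have "\<dots> = int ((q - 1) * (j * s)) mod int q"
        using q_pos by (simp add: of_nat_diff algebra_simps)
      finally show ?thesis .
    qed
    thus ?thesis by (metis of_nat_eq_iff zmod_int zeta_pow_mod)
  qed
  have reflect_reflect: "(q - (q - t) mod q) mod q = t" if "t < q" for t
    using that by (cases "t = 0") auto
  have "cnj (cyc_eval j a) = (\<Sum>t<q. of_int (a t) * zeta ^ ((q - 1) * (j * t)))"
    by (simp add: cyc_eval_def cnj_zeta power_mult)
  also have "\<dots> = (\<Sum>s<q. of_int (a ((q - s) mod q)) * zeta ^ (j * s))"
    by (rule sum.reindex_bij_witness[where i="\<lambda>s. (q - s) mod q" and j="\<lambda>t. (q - t) mod q"])
       (use q_pos in \<open>auto simp: neg reflect_reflect\<close>)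
  finally show ?thesis by (simp add: cyc_eval_def cyc_reflect_def)
qed

lemma cyc_parseval:
  "(\<Sum>j<q. cyc_eval j a * cnj (cyc_eval j a)) = of_nat q * of_int (\<Sum>t<q. (a t)\<^sup>2)"
proof -
  have "(\<Sum>j<q. cyc_eval j a * cnj (cyc_eval j a)) =
      (\<Sum>t<q. \<Sum>s<q. of_int (a t) * of_int (a s) * (\<Sum>j<q. zeta ^ (j * t) * cnj (zeta ^ (j * s))))"
  proof -
    have "(\<Sum>j<q. cyc_eval j a * cnj (cyc_eval j a)) =
        (\<Sum>j<q. \<Sum>t<q. \<Sum>s<q. of_int (a t) * of_int (a s) * (zeta ^ (j * t) * cnj (zeta ^ (j * s))))"
      unfolding cyc_eval_def cnj_sum sum_product by (simp add: mult_ac)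
    also have "\<dots> = (\<Sum>t<q. \<Sum>s<q. \<Sum>j<q. of_int (a t) * of_int (a s) * (zeta ^ (j * t) * cnj (zeta ^ (j * s))))"
      by (subst sum.swap) (rule sum.cong[OF refl], rule sum.swap)
    finally show ?thesis by (simp only: sum_distrib_left)
  qed
  also have "\<dots> = (\<Sum>t<q. \<Sum>s<q. of_int (a t) * of_int (a s) * (if t = s then of_nat q else 0))"
    by (intro sum.cong refl) (simp only: zeta_orthogonality lessThan_iff)
  also have "\<dots> = of_nat q * of_int (\<Sum>t<q. (a t)\<^sup>2)"
    by (simp add: if_distrib sum_distrib_left power2_eq_square mult_ac cong: if_cong)
  finally show ?thesis .
qed

lemma cyc_int_cyc_eval [intro]: "cyc_int (cyc_eval 1 a)"
  unfolding cyc_int_def by blast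

lemma cyc_int_algebraic_int: "cyc_int z \<Longrightarrow> algebraic_int z"
  unfolding cyc_int_def cyc_eval_def
  using algebraic_int_sum_root_of_unity[OF q_pos zeta_pow_q] by auto

lemma cyc_int_of_int_divide_imp_dvd:
  assumes "cyc_int (of_int a / of_int b)" "b \<noteq> 0"
  shows "b dvd a"
proof -
  have "(of_int a / of_int b :: complex) \<in> \<int>"
    by (intro rational_algebraic_int_is_int cyc_int_algebraic_int assms(1)) simp
  then obtain k where "(of_int a / of_int b :: complex) = of_int k" by (metis Ints_cases)
  hence "a = k * b" using assms(2) by (simp add: field_simps flip: of_int_mult)
  thus ?thesis by simp
qed

lemma cyc_int_of_int [intro]: "cyc_int (of_int k)"
  using cyc_eval_single[OF q_pos, of 1 k] cyc_int_cyc_eval by (metis mult_1_right power_0 mult_0_right)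

lemma cyc_int_0 [intro]: "cyc_int 0" and cyc_int_1 [intro]: "cyc_int 1"
  and cyc_int_of_nat [intro]: "cyc_int (of_nat n)" and cyc_int_numeral [intro]: "cyc_int (numeral m)"
  using cyc_int_of_int[of 0] cyc_int_of_int[of 1] cyc_int_of_int[of "int n"] cyc_int_of_int[of "numeral m"]
  by simp_all

lemma cyc_int_zeta_pow [intro]: "cyc_int (zeta ^ k)"
proof -
  have "zeta ^ k = cyc_eval 1 (\<lambda>t. if t = k mod q then 1 else 0)"
    using cyc_eval_single[of "k mod q" 1 1] q_pos zeta_pow_mod[of k] by simp
  thus ?thesis unfolding cyc_int_def by blast
qed

lemma cyc_int_add [intro]: "cyc_int x \<Longrightarrow> cyc_int y \<Longrightarrow> cyc_int (x + y)"
  unfolding cyc_int_def by (metis cyc_eval_add)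

lemma cyc_int_diff [intro]: "cyc_int x \<Longrightarrow> cyc_int y \<Longrightarrow> cyc_int (x - y)"
  unfolding cyc_int_def by (metis cyc_eval_diff)

lemma cyc_int_minus [intro]: "cyc_int x \<Longrightarrow> cyc_int (- x)"
  using cyc_int_diff[OF cyc_int_0] by (metis diff_0)

lemma cyc_int_mult [intro]: "cyc_int x \<Longrightarrow> cyc_int y \<Longrightarrow> cyc_int (x * y)"
  unfolding cyc_int_def by (metis cyc_eval_conv)

lemma cyc_int_cnj [intro]: "cyc_int x \<Longrightarrow> cyc_int (cnj x)"
  unfolding cyc_int_def by (metis cyc_eval_reflect)

lemma cyc_int_power [intro]: "cyc_int x \<Longrightarrow> cyc_int (x ^ k)"
  by (induction k) auto

lemma cyc_int_sum [intro]: "(\<And>i. i \<in> A \<Longrightarrow> cyc_int (f i)) \<Longrightarrow> cyc_int (\<Sum>i\<in>A. f i)"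
  by (induction A rule: infinite_finite_induct) auto

lemma cyc_dvd_refl [simp]: "cyc_dvd x x"
  unfolding cyc_dvd_def by (rule exI[of _ 1]) auto

lemma cyc_dvd_0 [simp]: "cyc_dvd x 0"
  unfolding cyc_dvd_def by (rule exI[of _ 0]) auto

lemma cyc_dvd_triv [intro]: "cyc_int y \<Longrightarrow> cyc_dvd x (x * y)"
  unfolding cyc_dvd_def by blast

lemma cyc_dvd_add [intro]: "cyc_dvd x y \<Longrightarrow> cyc_dvd x z \<Longrightarrow> cyc_dvd x (y + z)"
  unfolding cyc_dvd_def by (metis cyc_int_add distrib_left)

lemma cyc_dvd_diff [intro]: "cyc_dvd x y \<Longrightarrow> cyc_dvd x z \<Longrightarrow> cyc_dvd x (y - z)"
  unfolding cyc_dvd_def by (metis cyc_int_diff right_diff_distrib)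

lemma cyc_dvd_mult_right [intro]: "cyc_dvd x y \<Longrightarrow> cyc_int z \<Longrightarrow> cyc_dvd x (y * z)"
  unfolding cyc_dvd_def by (metis cyc_int_mult mult.assoc)

lemma cyc_dvd_mult_mono: "cyc_dvd x y \<Longrightarrow> cyc_dvd x' y' \<Longrightarrow> cyc_dvd (x * x') (y * y')"
  unfolding cyc_dvd_def by (metis cyc_int_mult mult.assoc mult.left_commute)

lemma cyc_dvd_trans: "cyc_dvd x y \<Longrightarrow> cyc_dvd y z \<Longrightarrow> cyc_dvd x z"
  unfolding cyc_dvd_def by (metis cyc_int_mult mult.assoc)

lemma cyc_dvd_diff_right_iff: "cyc_dvd x (y - z) \<Longrightarrow> cyc_dvd x y \<longleftrightarrow> cyc_dvd x z"
  using cyc_dvd_diff[of x y "y - z"] cyc_dvd_add[of x "y - z" z] by auto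

lemma cyc_dvd_sum [intro]: "(\<And>i. i \<in> A \<Longrightarrow> cyc_dvd x (f i)) \<Longrightarrow> cyc_dvd x (\<Sum>i\<in>A. f i)"
  by (induction A rule: infinite_finite_induct) auto

lemma cyc_dvd_power_mono: "cyc_dvd x y \<Longrightarrow> cyc_dvd (x ^ k) (y ^ k)"
  by (induction k) (auto intro: cyc_dvd_mult_mono)

lemma cyc_dvd_mult_cancel_left: "x \<noteq> 0 \<Longrightarrow> cyc_dvd (x * y) (x * z) \<Longrightarrow> cyc_dvd y z"
  unfolding cyc_dvd_def by (auto simp: mult.assoc)

lemma xi_eq_zeta_pow: "c \<ge> 0 \<Longrightarrow> xi (int q) c = zeta ^ nat c"
  by (simp add: xi_def zeta_def DeMoivre field_simps)

lemma sum_zeta_pow_eq_cyc_eval: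
  assumes "finite A" "\<forall>x\<in>A. g x < q"
  shows "(\<Sum>x\<in>A. zeta ^ g x) = cyc_eval 1 (\<lambda>t. int (card {x\<in>A. g x = t}))"
proof -
  have "(\<Sum>x\<in>A. zeta ^ g x) = (\<Sum>t<q. \<Sum>x\<in>{x\<in>A. g x = t}. zeta ^ g x)"
    by (rule sum.group[symmetric]) (use assms in auto)
  also have "\<dots> = cyc_eval 1 (\<lambda>t. int (card {x\<in>A. g x = t}))"
    unfolding cyc_eval_def by (intro sum.cong refl) simp
  finally show ?thesis .
qed

end

section \<open>The prime \<open>\<lambda> = 1 - \<zeta>\<close> over an odd prime \<open>q\<close>\<close>

locale odd_prime_cyclotomic = cyclotomic +
  assumes prime_q: "prime q" and odd_q: "odd q"
begin

lemma q_gt_1: "q > 1"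
  using prime_q prime_gt_1_nat by blast

lemma q_ge_3: "q \<ge> 3"
  using q_gt_1 odd_q by (cases "q = 2") auto

definition lam :: complex where
  "lam = 1 - zeta"

lemma lam_neq_0: "lam \<noteq> 0"
  using zeta_pow_eq_1_iff[of 1] q_gt_1 by (auto simp: lam_def)

lemma cyc_int_lam [intro]: "cyc_int lam"
  unfolding lam_def using cyc_int_zeta_pow[of 1] by auto

lemma cyc_dvd_lam_zeta_pow_diff_1: "cyc_dvd lam (zeta ^ t - 1)"
proof -
  have "zeta ^ t - 1 = lam * (- (\<Sum>i<t. zeta ^ i))"
    by (simp add: lam_def power_diff_1_eq algebra_simps)
  moreover have "cyc_int (- (\<Sum>i<t. zeta ^ i))"
    by (intro cyc_int_minus cyc_int_sum cyc_int_zeta_pow)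
  ultimately show ?thesis unfolding cyc_dvd_def by blast
qed

lemma cyc_dvd_lam_cyc_eval_diff_sum: "cyc_dvd lam (cyc_eval 1 a - of_int (\<Sum>t<q. a t))"
proof -
  have "cyc_eval 1 a - of_int (\<Sum>t<q. a t) = (\<Sum>t<q. (zeta ^ t - 1) * of_int (a t))"
    by (simp add: cyc_eval_def sum_subtractf algebra_simps)
  thus ?thesis using cyc_dvd_lam_zeta_pow_diff_1 by auto
qed

text \<open>Expanding \<open>1 = \<zeta>\<^sup>q = (1 - \<lambda>)\<^sup>q\<close> and using \<open>q dvd (q choose k)\<close> for \<open>0 < k < q\<close>.\<close>
lemma lam_pow_eq: "\<exists>y. cyc_int y \<and> lam ^ (q - 1) = of_nat q * (lam * y - 1)"
proof -
  define f where "f k = of_nat (q choose k) * (- lam) ^ k" for k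
  define y where "y = (\<Sum>k\<in>{2..<q}. of_nat ((q choose k) div q) * (- 1) ^ k * lam ^ (k - 2))"
  have "(\<Sum>k\<le>q. f k) = zeta ^ q"
    unfolding f_def binomial_ring[of "- lam" 1 q, simplified, symmetric] by (simp add: lam_def)
  also have "{..q} = insert 0 (insert 1 (insert q {2..<q}))"
    using q_ge_3 by auto
  finally have "f 0 + (f 1 + (f q + (\<Sum>k\<in>{2..<q}. f k))) = 1"
    using q_ge_3 by (simp add: zeta_pow_q)
  moreover have "f 0 = 1" "f 1 = - of_nat q * lam" "f q = - (lam ^ q)"
    using odd_q by (simp_all add: f_def power_minus_odd)
  moreover have "(\<Sum>k\<in>{2..<q}. f k) = of_nat q * lam\<^sup>2 * y"
    unfolding y_def sum_distrib_left
  proof (rule sum.cong[OF refl])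
    fix k assume k: "k \<in> {2..<q}"
    have "q dvd (q choose k)" using k prime_q by (intro dvd_choose_prime) auto
    moreover have "lam ^ k = lam\<^sup>2 * lam ^ (k - 2)"
      using k by (metis atLeastLessThan_iff le_add_diff_inverse power_add)
    ultimately show "f k = of_nat q * lam\<^sup>2 * (of_nat ((q choose k) div q) * (- 1) ^ k * lam ^ (k - 2))"
      unfolding f_def power_minus[of lam k] by (simp add: mult_ac flip: of_nat_mult)
  qed
  ultimately have "lam * lam ^ (q - 1) = lam * (of_nat q * (lam * y - 1))"
    using q_gt_1 by (simp add: power_eq_if power2_eq_square algebra_simps)
  moreover have "cyc_int y" unfolding y_def
    by (intro cyc_int_sum cyc_int_mult cyc_int_of_nat cyc_int_power cyc_int_minus cyc_int_1 cyc_int_lam)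
  ultimately show ?thesis using lam_neq_0 by auto
qed

lemma cyc_dvd_of_nat_q_lam_pow: "cyc_dvd (of_nat q) (lam ^ (q - 1))"
proof -
  obtain y where "cyc_int y" "lam ^ (q - 1) = of_nat q * (lam * y - 1)"
    using lam_pow_eq by blast
  moreover have "cyc_int (lam * y - 1)"
    using \<open>cyc_int y\<close> by (intro cyc_int_diff cyc_int_mult cyc_int_lam cyc_int_1)
  ultimately show ?thesis unfolding cyc_dvd_def by blast
qed

lemma cyc_dvd_lam_pow_of_nat_q: "cyc_dvd (lam ^ (q - 1)) (of_nat q)"
proof -
  obtain y where y: "cyc_int y" "lam ^ (q - 1) = of_nat q * (lam * y - 1)"
    using lam_pow_eq by blast
  define u where "u = lam * y"
  have "of_nat q = of_nat q * (1 - u ^ (q - 1)) + of_nat q * u ^ (q - 1)"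
    by (simp add: algebra_simps)
  also have "of_nat q * (1 - u ^ (q - 1)) = - (lam ^ (q - 1) * (\<Sum>i<q - 1. u ^ i))"
    unfolding one_diff_power_eq y(2) u_def by (simp add: algebra_simps)
  also have "of_nat q * u ^ (q - 1) = lam ^ (q - 1) * (of_nat q * y ^ (q - 1))"
    by (simp add: u_def power_mult_distrib)
  finally have "of_nat q = lam ^ (q - 1) * (of_nat q * y ^ (q - 1) - (\<Sum>i<q - 1. u ^ i))"
    by (simp add: algebra_simps)
  moreover have "cyc_int (of_nat q * y ^ (q - 1) - (\<Sum>i<q - 1. u ^ i))"
    unfolding u_def using y(1) by (intro cyc_int_diff cyc_int_mult cyc_int_sum cyc_int_power cyc_int_of_nat cyc_int_lam)
  ultimately show ?thesis unfolding cyc_dvd_def by blast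
qed

lemma cyc_dvd_lam_pow_mono:
  assumes "b \<le> a" "cyc_dvd (lam ^ a) x"
  shows "cyc_dvd (lam ^ b) x"
proof -
  have "lam ^ a = lam ^ b * lam ^ (a - b)"
    using assms(1) by (simp flip: power_add)
  hence "cyc_dvd (lam ^ b) (lam ^ a)"
    by (simp add: cyc_dvd_triv cyc_int_power cyc_int_lam)
  thus ?thesis using assms(2) by (rule cyc_dvd_trans)
qed

lemma cyc_dvd_lam_of_nat_q: "cyc_dvd lam (of_nat q)"
  using cyc_dvd_lam_pow_mono[of 1 "q - 1"] cyc_dvd_lam_pow_of_nat_q q_gt_1 by simp

lemma not_cyc_dvd_lam_1: "\<not> cyc_dvd lam 1"
proof
  assume "cyc_dvd lam 1"
  hence "cyc_dvd (of_nat q) 1"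
    using cyc_dvd_trans[OF cyc_dvd_of_nat_q_lam_pow cyc_dvd_power_mono] by fastforce
  then obtain u where u: "cyc_int u" "1 = of_nat q * u"
    unfolding cyc_dvd_def by blast
  hence "u = of_int 1 / of_int (int q)"
    using q_gt_1 by (simp add: field_simps)
  hence "cyc_int (of_int 1 / of_int (int q))"
    using u(1) by simp
  hence "int q dvd 1"
    by (rule cyc_int_of_int_divide_imp_dvd) (use q_gt_1 in simp)
  thus False using q_gt_1 by simp
qed

lemma cyc_dvd_lam_of_int_iff: "cyc_dvd lam (of_int k) \<longleftrightarrow> int q dvd k"
proof
  assume "int q dvd k"
  then obtain c where "k = int q * c" by blast
  thus "cyc_dvd lam (of_int k)"
    using cyc_dvd_mult_right[OF cyc_dvd_lam_of_nat_q cyc_int_of_int[of c]] by simp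
next
  assume d: "cyc_dvd lam (of_int k)"
  show "int q dvd k"
  proof (rule ccontr)
    assume "\<not> int q dvd k"
    hence "coprime (int q) k" using prime_q by (simp add: prime_imp_coprime_int)
    then obtain u v where "u * int q + v * k = 1" by (metis bezout_int coprime_iff_gcd_eq_1)
    hence "(1::complex) = of_nat q * of_int u + of_int k * of_int v"
      by (metis mult.commute of_int_1 of_int_add of_int_mult of_int_of_nat_eq)
    moreover have "cyc_dvd lam (of_nat q * of_int u + of_int k * of_int v)"
      using cyc_dvd_lam_of_nat_q d by auto
    ultimately show False using not_cyc_dvd_lam_1 by simp
  qed
qed

lemma cyc_dvd_lam_cyc_eval_iff: "cyc_dvd lam (cyc_eval 1 a) \<longleftrightarrow> int q dvd (\<Sum>t<q. a t)"
  using cyc_dvd_diff_right_iff[OF cyc_dvd_lam_cyc_eval_diff_sum[of a]]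
    cyc_dvd_lam_of_int_iff[of "\<Sum>t<q. a t"] by simp

lemma cyc_dvd_lam_multD:
  assumes "cyc_int x" "cyc_int y" "cyc_dvd lam (x * y)"
  shows "cyc_dvd lam x \<or> cyc_dvd lam y"
proof -
  obtain a b where ab: "x = cyc_eval 1 a" "y = cyc_eval 1 b"
    using assms(1,2) unfolding cyc_int_def by blast
  define A B where "A = (\<Sum>t<q. a t)" and "B = (\<Sum>t<q. b t)"
  have "x * y - of_int (A * B) = (x - of_int A) * y + (y - of_int B) * of_int A"
    by (simp add: algebra_simps)
  moreover have "cyc_dvd lam ((x - of_int A) * y + (y - of_int B) * of_int A)"
    using cyc_dvd_lam_cyc_eval_diff_sum assms(2) unfolding ab A_def B_def by blast
  ultimately have "cyc_dvd lam (x * y - of_int (A * B))"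
    by simp
  hence "cyc_dvd lam (of_int (A * B))"
    using cyc_dvd_diff_right_iff assms(3) by blast
  hence "int q dvd A \<or> int q dvd B"
    using cyc_dvd_lam_of_int_iff[of "A * B"] prime_q by (simp add: prime_dvd_mult_iff)
  thus ?thesis unfolding ab A_def B_def cyc_dvd_lam_cyc_eval_iff .
qed

lemma cnj_lam: "cnj lam = lam * (- cnj zeta)"
  using zeta_pow_times_cnj[of 1] by (simp add: lam_def algebra_simps)

lemma cyc_dvd_lam_pow_cnj:
  assumes "cyc_dvd (lam ^ k) z"
  shows "cyc_dvd (lam ^ k) (cnj z)"
proof -
  obtain w where w: "cyc_int w" "z = lam ^ k * w" using assms cyc_dvd_def by blast
  have "cnj z = cnj lam ^ k * cnj w"
    by (simp add: w(2))
  also have "\<dots> = lam ^ k * ((- cnj zeta) ^ k * cnj w)"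
    by (simp only: cnj_lam power_mult_distrib mult.assoc)
  finally have "cnj z = lam ^ k * ((- cnj zeta) ^ k * cnj w)" .
  moreover have "cyc_int ((- cnj zeta) ^ k * cnj w)"
    using w(1) cyc_int_zeta_pow[of 1] by (intro cyc_int_mult cyc_int_power cyc_int_minus cyc_int_cnj) simp_all
  ultimately show ?thesis unfolding cyc_dvd_def by blast
qed

text \<open>Since \<open>\<lambda>\<close> is prime and \<open>\<lambda>\<close>, \<open>cnj \<lambda>\<close> are associates, the \<open>\<lambda>\<close>-adic valuation of \<open>z * cnj z\<close>
  is twice that of \<open>z\<close>.\<close>
lemma cyc_dvd_lam_pow_of_norm:
  assumes "cyc_int z" "cyc_dvd (lam ^ (2 * k)) (z * cnj z)"
  shows "cyc_dvd (lam ^ k) z"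
  using assms(2)
proof (induction k)
  case 0
  thus ?case using assms(1) by (simp add: cyc_dvd_def)
next
  case (Suc k)
  hence "cyc_dvd (lam ^ k) z"
    using cyc_dvd_lam_pow_mono[of "2 * k" "2 * Suc k"] by simp
  then obtain z1 where z1: "cyc_int z1" "z = lam ^ k * z1" using cyc_dvd_def by blast
  have "z * cnj z = lam ^ k * cnj lam ^ k * (z1 * cnj z1)"
    by (simp add: z1(2) mult_ac)
  also have "\<dots> = lam ^ (2 * k) * ((- cnj zeta) ^ k * (z1 * cnj z1))"
    by (simp only: cnj_lam power_mult_distrib mult_2 power_add mult.assoc)
  finally have "z * cnj z = lam ^ (2 * k) * ((- cnj zeta) ^ k * (z1 * cnj z1))" .
  with Suc.prems have "cyc_dvd (lam ^ (2 * k) * lam\<^sup>2) (lam ^ (2 * k) * ((- cnj zeta) ^ k * (z1 * cnj z1)))"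
    by (simp add: power_add[symmetric])
  hence "cyc_dvd (lam\<^sup>2) ((- cnj zeta) ^ k * (z1 * cnj z1))"
    by (rule cyc_dvd_mult_cancel_left[rotated]) (simp add: lam_neq_0)
  moreover have "cyc_int ((- zeta) ^ k)"
    using cyc_int_zeta_pow[of 1] by (intro cyc_int_power cyc_int_minus) simp
  ultimately have "cyc_dvd (lam\<^sup>2) ((- cnj zeta) ^ k * (z1 * cnj z1) * (- zeta) ^ k)"
    by (rule cyc_dvd_mult_right)
  also have "(- cnj zeta) ^ k * (z1 * cnj z1) * (- zeta) ^ k = ((- cnj zeta) * (- zeta)) ^ k * (z1 * cnj z1)"
    by (simp only: power_mult_distrib mult_ac)
  also have "(- cnj zeta) * (- zeta) = 1"
    using zeta_pow_times_cnj[of 1] by (simp add: mult.commute)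
  finally have "cyc_dvd (lam\<^sup>2) (z1 * cnj z1)" by simp
  hence "cyc_dvd lam (z1 * cnj z1)"
    using cyc_dvd_lam_pow_mono[of 1 2] by simp
  hence "cyc_dvd lam z1"
    using cyc_dvd_lam_multD z1(1) cyc_dvd_lam_pow_cnj[of 1 "cnj z1"] by auto
  then obtain z2 where "cyc_int z2" "z1 = lam * z2" using cyc_dvd_def by blast
  thus ?case using z1(2) by (auto simp: cyc_dvd_def mult_ac)
qed

section \<open>Linear independence and Kronecker's theorem\<close>

lemma lam_pow_dvd_imp_coeffs_dvd:
  "k \<le> q - 1 \<Longrightarrow> cyc_dvd (lam ^ k) (\<Sum>i<k. of_int (c i) * lam ^ i) \<Longrightarrow> \<forall>i<k. int q dvd c i"
proof (induction k arbitrary: c)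
  case 0
  thus ?case by simp
next
  case (Suc k)
  define y where "y = (\<Sum>i<k. of_int (c (Suc i)) * lam ^ i)"
  have sum_eq: "(\<Sum>i<Suc k. of_int (c i) * lam ^ i) = of_int (c 0) + lam * y"
    unfolding y_def sum.lessThan_Suc_shift by (simp add: sum_distrib_left mult_ac)
  have y: "cyc_int y"
    unfolding y_def by (intro cyc_int_sum cyc_int_mult cyc_int_of_int cyc_int_power cyc_int_lam)
  have "cyc_dvd lam (of_int (c 0) + lam * y)"
    using cyc_dvd_lam_pow_mono[of 1 "Suc k"] Suc.prems(2) sum_eq by simp
  hence "cyc_dvd lam (of_int (c 0))"
    using cyc_dvd_diff[OF _ cyc_dvd_triv[OF y]] by fastforce
  hence c0: "int q dvd c 0"
    using cyc_dvd_lam_of_int_iff by blast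
  then obtain e where "c 0 = int q * e" by blast
  hence "cyc_dvd (lam ^ (q - 1)) (of_int (c 0))"
    using cyc_dvd_mult_right[OF cyc_dvd_lam_pow_of_nat_q cyc_int_of_int[of e]] by simp
  hence "cyc_dvd (lam ^ Suc k) (of_int (c 0))"
    using cyc_dvd_lam_pow_mono Suc.prems(1) by blast
  hence "cyc_dvd (lam * lam ^ k) (lam * y)"
    using cyc_dvd_diff[OF Suc.prems(2)[unfolded sum_eq]] by fastforce
  hence "cyc_dvd (lam ^ k) y"
    using cyc_dvd_mult_cancel_left lam_neq_0 by blast
  hence "\<forall>i<k. int q dvd c (Suc i)"
    using Suc.IH[of "\<lambda>i. c (Suc i)"] Suc.prems(1) y_def by simp
  thus ?case using c0 by (auto simp: less_Suc_eq_0_disj)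
qed

lemma lam_powers_independent:
  assumes "(\<Sum>i<q - 1. of_int (c i) * lam ^ i) = 0"
  shows "\<forall>i<q - 1. c i = 0"
proof -
  have "\<forall>c. (\<Sum>i<q - 1. of_int (c i) * lam ^ i) = 0 \<longrightarrow> (\<forall>i<q - 1. int q ^ N dvd c i)" for N
  proof (induction N)
    case 0
    thus ?case by simp
  next
    case (Suc N)
    show ?case
    proof (intro allI impI)
      fix c i assume c: "(\<Sum>i<q - 1. of_int (c i) * lam ^ i) = 0" and i: "i < q - 1"
      have "\<forall>i<q - 1. int q dvd c i"
        using lam_pow_dvd_imp_coeffs_dvd[of "q - 1" c] c by simp
      hence c_eq: "c j = int q * (c j div int q)" if "j < q - 1" for j
        using that by simp
      have "of_nat q * (\<Sum>j<q - 1. of_int (c j div int q) * lam ^ j) = (\<Sum>j<q - 1. of_int (c j) * lam ^ j)"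
        unfolding sum_distrib_left by (intro sum.cong refl) (subst (2) c_eq, auto)
      hence "(\<Sum>j<q - 1. of_int (c j div int q) * lam ^ j) = 0"
        using c q_gt_1 by simp
      hence "int q ^ N dvd c i div int q"
        using Suc.IH[rule_format, of "\<lambda>j. c j div int q"] i by simp
      hence "int q * int q ^ N dvd int q * (c i div int q)"
        by simp
      thus "int q ^ Suc N dvd c i"
        using c_eq[OF i] by simp
    qed
  qed
  thus ?thesis
    using assms int_eq_0_if_all_powers_dvd[of "int q"] q_gt_1 by auto
qed

text \<open>Transport from the basis \<open>\<lambda>\<^sup>i\<close> to the basis \<open>\<zeta>\<^sup>i\<close> via the substitution \<open>x \<mapsto> 1 - x\<close>.\<close>
lemma zeta_powers_independent:
  assumes "(\<Sum>t<q - 1. of_int (b t) * zeta ^ t) = 0"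
  shows "\<forall>t<q - 1. b t = 0"
proof -
  define B :: "int poly" where "B = (\<Sum>t<q - 1. monom (b t) t)"
  define r :: "int poly" where "r = [:1, -1:]"
  define C where "C = pcompose B r"
  have coeff_B: "coeff B t = (if t < q - 1 then b t else 0)" for t
    unfolding B_def coeff_sum coeff_monom by (simp add: sum.delta' cong: if_cong)
  have deg_B: "degree B < q - 1"
  proof -
    have "degree B \<le> q - 2"
      unfolding B_def by (rule degree_sum_le) (use q_gt_1 in \<open>auto intro: order.trans[OF degree_monom_le]\<close>)
    thus ?thesis using q_gt_1 by simp
  qed
  have deg_C: "degree C < q - 1"
    using degree_pcompose_le[of B r] deg_B unfolding C_def r_def by simp
  have "poly (of_int_poly C) lam = poly (of_int_poly B) zeta"
    by (simp add: C_def of_int_hom.map_poly_pcompose poly_pcompose r_def lam_def)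
  also have "\<dots> = 0"
    using poly_eq_sum_lessThan[of "of_int_poly B" "q - 1" zeta] deg_B coeff_B assms by simp
  finally have "(\<Sum>i<q - 1. of_int (coeff C i) * lam ^ i) = 0"
    using poly_eq_sum_lessThan[of "of_int_poly C" "q - 1" lam] deg_C by simp
  hence "C = 0"
    using lam_powers_independent deg_C by (metis coeff_eq_0 leading_coeff_0_iff not_less)
  have "B = pcompose B (pcompose r r)" by (simp add: r_def)
  also have "\<dots> = 0" using \<open>C = 0\<close> by (simp add: C_def pcompose_assoc)
  finally show ?thesis using coeff_B by (metis coeff_0)
qed

lemma cyc_eval_eq_0_imp_const:
  assumes "cyc_eval 1 a = 0"
  shows "\<forall>t<q. a t = a (q - 1)"
proof -
  define b where "b t = a t - a (q - 1)" for t
  have "(\<Sum>t<q. of_int (b t) * zeta ^ t) = cyc_eval 1 a - of_int (a (q - 1)) * (\<Sum>t<q. zeta ^ (1 * t))"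
    by (simp add: b_def cyc_eval_def sum_subtractf sum_distrib_left sum_distrib_right algebra_simps)
  also have "\<dots> = 0" using assms sum_zeta_pow_eq_0[of 1] q_gt_1 by simp
  finally have "(\<Sum>t<q. of_int (b t) * zeta ^ t) = 0" .
  moreover have "{..<q} = insert (q - 1) {..<q - 1}" using q_gt_1 by auto
  ultimately have "(\<Sum>t<q - 1. of_int (b t) * zeta ^ t) = 0" by (simp add: b_def)
  hence "\<forall>t<q - 1. b t = 0" by (rule zeta_powers_independent)
  thus ?thesis unfolding b_def by (metis eq_iff_diff_eq_0 less_SucE Suc_diff_1 q_pos)
qed

lemma cyc_eval_eq_if_cyc_eval_1_eq:
  assumes "cyc_eval 1 a = cyc_eval 1 b" "\<not> q dvd j"
  shows "cyc_eval j a = cyc_eval j b"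
proof -
  define k where "k = a (q - 1) - b (q - 1)"
  have "cyc_eval 1 (\<lambda>t. a t - b t) = 0"
    using assms(1) by (simp add: cyc_eval_diff)
  hence const: "a t - b t = k" if "t < q" for t
    using cyc_eval_eq_0_imp_const that unfolding k_def by blast
  have "cyc_eval j (\<lambda>t. a t - b t) = cyc_eval j (\<lambda>t. k)"
    unfolding cyc_eval_def by (intro sum.cong refl) (simp add: const)
  also have "\<dots> = 0"
    using cyc_eval_const sum_zeta_pow_eq_0[OF assms(2)] by simp
  finally show ?thesis by (simp add: cyc_eval_diff)
qed
text \<open>Kronecker's theorem for \<open>\<int>[\<zeta>]\<close>: \<open>\<delta> * cnj \<delta> = 1\<close> holds in every embedding, so
  Parseval gives \<open>q \<Sum> a\<^sub>t\<^sup>2 - (\<Sum> a\<^sub>t)\<^sup>2 = q - 1\<close> for the coefficients of \<open>\<delta>\<close>.\<close>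
lemma cyc_int_norm_1_imp_root_of_unity:
  assumes "cyc_int \<delta>" "\<delta> * cnj \<delta> = 1"
  shows "\<exists>c<q. \<exists>d::int. d\<^sup>2 = 1 \<and> \<delta> = of_int d * zeta ^ c"
proof -
  obtain a where a: "\<delta> = cyc_eval 1 a" using assms(1) cyc_int_def by blast
  define one where "one = (\<lambda>t::nat. if t = 0 then (1::int) else 0)"
  have one: "cyc_eval j one = 1" for j
    using cyc_eval_single[of 0 j 1] q_pos by (simp add: one_def)
  have "cyc_eval 1 (cyc_conv a (cyc_reflect a)) = cyc_eval 1 one"
    using assms(2) by (simp add: a one cyc_eval_conv cyc_eval_reflect)
  hence norm_j: "cyc_eval j a * cnj (cyc_eval j a) = 1" if "j \<in> {1..<q}" for j
    using cyc_eval_eq_if_cyc_eval_1_eq[of "cyc_conv a (cyc_reflect a)" one j] that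
    by (simp add: one cyc_eval_conv cyc_eval_reflect nat_dvd_not_less)
  have "(\<Sum>j<q. cyc_eval j a * cnj (cyc_eval j a)) =
      cyc_eval 0 a * cnj (cyc_eval 0 a) + (\<Sum>j\<in>{1..<q}. cyc_eval j a * cnj (cyc_eval j a))"
  proof -
    have "{..<q} = insert 0 {1..<q}" using q_pos by auto
    thus ?thesis by simp
  qed
  also have "(\<Sum>j\<in>{1..<q}. cyc_eval j a * cnj (cyc_eval j a)) = of_nat (q - 1)"
    using norm_j by simp
  finally have "of_nat q * of_int (\<Sum>t<q. (a t)\<^sup>2) = (of_int ((\<Sum>t<q. a t)\<^sup>2 + int (q - 1)) :: complex)"
    using cyc_parseval[of a] by (simp add: cyc_eval_0 power2_eq_square)
  hence "of_int (int q * (\<Sum>t<q. (a t)\<^sup>2)) = (of_int ((\<Sum>t<q. a t)\<^sup>2 + int (q - 1)) :: complex)"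
    by simp
  hence "int q * (\<Sum>t<q. (a t)\<^sup>2) = (\<Sum>t<q. a t)\<^sup>2 + int (q - 1)"
    by (simp only: of_int_eq_iff)
  hence "int q * (\<Sum>t<q. (a t)\<^sup>2) - (\<Sum>t<q. a t)\<^sup>2 = int q - 1"
    using q_pos by (simp add: of_nat_diff)
  moreover have "q \<ge> 2" using q_gt_1 by simp
  ultimately obtain c v d where c: "c < q" "d\<^sup>2 = 1" "\<forall>t<q. t \<noteq> c \<longrightarrow> a t = v" "a c = v + d"
    using one_outlier_if_spread_eq by blast
  have "cyc_eval 1 a = cyc_eval 1 (\<lambda>t. v + (if t = c then d else 0))"
    unfolding cyc_eval_def using c by (intro sum.cong refl) auto
  also have "\<dots> = of_int d * zeta ^ c"
    using sum_zeta_pow_eq_0[of 1] q_gt_1 by (simp add: cyc_eval_add cyc_eval_const cyc_eval_single[OF c(1)])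
  finally show ?thesis using a c by blast
qed

section \<open>Elements congruent to \<open>1\<close> modulo \<open>2\<close>\<close>

text \<open>If \<open>c \<noteq> 0\<close> then \<open>c\<close> generates \<open>\<int>/q\<close>, so \<open>2\<close> divides every \<open>\<zeta>\<^sup>t - 1\<close> and hence
  their sum \<open>-q\<close>, which is odd.\<close>
lemma cyc_dvd_2_zeta_pow_diff_1_imp:
  assumes "c < q" "cyc_dvd 2 (zeta ^ c - 1)"
  shows "c = 0"
proof (rule ccontr)
  assume "c \<noteq> 0"
  have multiples: "cyc_dvd 2 (zeta ^ (c * k) - 1)" for k
  proof (induction k)
    case (Suc k)
    have "zeta ^ (c * Suc k) - 1 = (zeta ^ (c * k) - 1) * zeta ^ c + (zeta ^ c - 1)"
      by (simp add: algebra_simps power_add)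
    moreover have "cyc_dvd 2 ((zeta ^ (c * k) - 1) * zeta ^ c + (zeta ^ c - 1))"
      using Suc assms(2) by (intro cyc_dvd_add cyc_dvd_mult_right cyc_int_zeta_pow)
    ultimately show ?case by (simp only:)
  qed simp
  have "\<not> q dvd c"
    using assms(1) \<open>c \<noteq> 0\<close> nat_dvd_not_less by blast
  hence "coprime c q"
    using prime_imp_coprime[OF prime_q] coprime_commute by blast
  then obtain x y where xy: "c * x = q * y + 1"
    using bezout_nat[of c q] \<open>c \<noteq> 0\<close> by auto
  have all: "cyc_dvd 2 (zeta ^ t - 1)" for t
  proof -
    have "c * (x * t) = (q * y + 1) * t"
      by (simp only: mult.assoc[symmetric] xy)
    hence "(c * (x * t)) mod q = t mod q"
      by (simp add: algebra_simps)
    thus ?thesis using multiples[of "x * t"] zeta_pow_mod by metis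
  qed
  have "(\<Sum>t<q. zeta ^ t - 1) = - of_nat q"
    using sum_zeta_pow_eq_0[of 1] q_gt_1 by (simp add: sum_subtractf)
  moreover have "cyc_dvd 2 (\<Sum>t<q. zeta ^ t - 1)"
    using all by auto
  ultimately obtain w where w: "cyc_int w" "- of_nat q = 2 * w"
    unfolding cyc_dvd_def by auto
  hence "w = of_int (- int q) / of_int 2" by (simp add: field_simps)
  hence "cyc_int (of_int (- int q) / of_int 2)"
    using w(1) by simp
  hence "2 dvd - int q"
    by (rule cyc_int_of_int_divide_imp_dvd) simp
  thus False using odd_q by simp
qed

lemma cyc_dvd_2_odd_zeta_pow_diff_1_imp:
  assumes "c < q" "odd k" "cyc_dvd 2 (of_int k * zeta ^ c - 1)"
  shows "c = 0"
proof -
  obtain j where "k = 2 * j + 1"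
    using assms(2) by (rule oddE)
  hence "zeta ^ c - 1 = (of_int k * zeta ^ c - 1) - 2 * (of_int j * zeta ^ c)"
    by (simp add: algebra_simps)
  also have "cyc_dvd 2 \<dots>"
    by (intro cyc_dvd_diff[OF assms(3)] cyc_dvd_triv cyc_int_mult cyc_int_of_int cyc_int_zeta_pow)
  finally show ?thesis
    using cyc_dvd_2_zeta_pow_diff_1_imp assms(1) by blast
qed

lemma cyc_dvd_of_norm_eq_q_pow:
  assumes "cyc_int z" "z * cnj z = of_nat q ^ (2 * m)"
  shows "\<exists>\<delta>. cyc_int \<delta> \<and> \<delta> * cnj \<delta> = 1 \<and> z = of_nat q ^ m * \<delta>"
proof -
  have "cyc_dvd ((lam ^ (q - 1)) ^ (2 * m)) (z * cnj z)"
    unfolding assms(2) by (rule cyc_dvd_power_mono[OF cyc_dvd_lam_pow_of_nat_q])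
  hence "cyc_dvd (lam ^ (2 * (m * (q - 1)))) (z * cnj z)"
    by (simp add: power_mult[symmetric] mult_ac)
  hence "cyc_dvd (lam ^ (m * (q - 1))) z"
    using cyc_dvd_lam_pow_of_norm assms(1) by blast
  hence "cyc_dvd (of_nat q ^ m) z"
    using cyc_dvd_trans[OF cyc_dvd_power_mono[OF cyc_dvd_of_nat_q_lam_pow]]
    by (simp add: power_mult[symmetric] mult.commute)
  then obtain \<delta> where \<delta>: "cyc_int \<delta>" "z = of_nat q ^ m * \<delta>"
    unfolding cyc_dvd_def by blast
  have qq: "(of_nat q ^ (2 * m) :: complex) = of_nat q ^ m * of_nat q ^ m"
    by (simp add: mult_2 power_add)
  have "of_nat q ^ m * of_nat q ^ m * (\<delta> * cnj \<delta>) = of_nat q ^ m * of_nat q ^ m * (1::complex)"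
    using assms(2) unfolding qq by (simp add: \<delta>(2) mult_ac)
  hence "\<delta> * cnj \<delta> = 1"
    using q_pos by simp
  thus ?thesis using \<delta> by blast
qed

lemma one_plus_two_cyc_int_neq_0:
  assumes "cyc_int w"
  shows "1 + 2 * w \<noteq> 0"
proof
  assume "1 + 2 * w = 0"
  hence "w = of_int (- 1) / of_int 2"
    by (simp add: field_simps eq_neg_iff_add_eq_0)
  hence "cyc_int (of_int (- 1) / of_int 2)"
    using assms by simp
  hence "2 dvd (- 1 :: int)"
    by (rule cyc_int_of_int_divide_imp_dvd) simp
  thus False by simp
qed

text \<open>For \<open>\<beta> = 1 + 2 w\<close>: by valuation \<open>\<beta>\<^sup>2 = q\<^sup>m \<delta>\<close> with \<open>\<delta>\<close> a root of unity (Kronecker),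
  and \<open>\<beta>\<^sup>2 \<equiv> 1 (mod 4)\<close> forces \<open>\<delta> = \<plusminus>1\<close> and fixes the sign.\<close>
lemma square_of_odd_elem_of_norm_q_pow:
  assumes w: "cyc_int w" and norm: "(1 + 2 * w) * cnj (1 + 2 * w) = of_nat q ^ m"
  shows "\<exists>d::int. d\<^sup>2 = 1 \<and> (1 + 2 * w)\<^sup>2 = of_int (d * int q ^ m) \<and> (d * int q ^ m) mod 4 = 1"
proof -
  define z where "z = (1 + 2 * w)\<^sup>2"
  have "z * cnj z = ((1 + 2 * w) * cnj (1 + 2 * w))\<^sup>2"
    unfolding z_def by (simp add: power_mult_distrib)
  also have "\<dots> = of_nat q ^ (2 * m)"
    unfolding norm by (simp add: power_mult mult.commute)
  finally have norm_z: "z * cnj z = of_nat q ^ (2 * m)" .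
  have "cyc_int z"
    unfolding z_def using w by (intro cyc_int_power cyc_int_add cyc_int_mult cyc_int_1 cyc_int_numeral)
  then obtain \<delta> where \<delta>: "cyc_int \<delta>" "\<delta> * cnj \<delta> = 1" "z = of_nat q ^ m * \<delta>"
    using cyc_dvd_of_norm_eq_q_pow norm_z by blast
  then obtain c d where cd: "c < q" "d\<^sup>2 = (1::int)" "\<delta> = of_int d * zeta ^ c"
    using cyc_int_norm_1_imp_root_of_unity by blast
  have z_minus_1: "z - 1 = 2 * (2 * (w + w\<^sup>2))"
    unfolding z_def by (simp add: power2_eq_square algebra_simps)
  have "d = 1 \<or> d = -1"
    using cd(2) by (simp add: power2_eq_1_iff)
  hence "odd (d * int q ^ m)"
    using odd_q by auto
  moreover have "cyc_dvd 2 (z - 1)"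
    unfolding z_minus_1 using w by (intro cyc_dvd_triv cyc_int_mult cyc_int_add cyc_int_power cyc_int_numeral)
  moreover have "z = of_int (d * int q ^ m) * zeta ^ c"
    using \<delta>(3) cd(3) by (simp add: mult_ac)
  ultimately have "c = 0"
    using cyc_dvd_2_odd_zeta_pow_diff_1_imp cd(1) by metis
  hence z: "z = of_int (d * int q ^ m)"
    using \<delta>(3) cd(3) by simp
  hence "w + w\<^sup>2 = of_int (d * int q ^ m - 1) / of_int 4"
    using z_minus_1 by (simp add: field_simps)
  hence "cyc_int (of_int (d * int q ^ m - 1) / of_int 4)"
    using w by (metis cyc_int_add cyc_int_power)
  hence "4 dvd d * int q ^ m - 1"
    by (rule cyc_int_of_int_divide_imp_dvd) simp
  hence "(d * int q ^ m) mod 4 = 1"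
    by presburger
  thus ?thesis using cd(2) z unfolding z_def by blast
qed

lemma sign_zeta_pow_inj:
  assumes "c < q" "c' < q" "\<epsilon>\<^sup>2 = 1" "\<epsilon>'\<^sup>2 = 1" "of_int \<epsilon> * zeta ^ c = of_int \<epsilon>' * zeta ^ c'"
  shows "c = c'"
proof -
  have square: "zeta ^ (2 * c) = zeta ^ (2 * c')"
    using arg_cong[OF assms(5), of "\<lambda>x. x\<^sup>2"] assms(3,4)
    by (simp add: power_mult_distrib power_mult mult.commute flip: of_int_power)
  have half: "2 * ((q + 1) div 2) = q + 1"
    using odd_q by simp
  have pow: "zeta ^ k = (zeta ^ (2 * k)) ^ ((q + 1) div 2)" for k
  proof -
    have "(zeta ^ (2 * k)) ^ ((q + 1) div 2) = zeta ^ (k * (2 * ((q + 1) div 2)))"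
      by (simp only: power_mult[symmetric] mult_ac)
    also have "\<dots> = (zeta ^ q) ^ k * zeta ^ k"
      by (simp only: half distrib_left mult_1_right power_add power_mult mult.commute[of k q])
    finally show ?thesis by (simp add: zeta_pow_q)
  qed
  have "zeta ^ c = (zeta ^ (2 * c)) ^ ((q + 1) div 2)"
    by (rule pow)
  also have "\<dots> = zeta ^ c'"
    by (simp only: square pow[of c', symmetric])
  finally show ?thesis
    using zeta_pow_inj assms(1,2) by blast
qed

end

section \<open>The Walsh coefficient at zero\<close>

lemma Vsp_finite: "finite (Vsp p n)"
proof -
  have "Vsp p n \<subseteq> {x. \<forall>i. (i \<in> {..<n} \<longrightarrow> x i \<in> {0..<p}) \<and> (i \<notin> {..<n} \<longrightarrow> x i = 0)}"
    unfolding Vsp_def by auto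
  thus ?thesis using finite_set_of_finite_funs[of "{..<n}" "{0..<p}" 0] finite_subset by blast
qed

lemma vzero_in_Vsp: "p > 0 \<Longrightarrow> vzero \<in> Vsp p n"
  by (simp add: Vsp_def vzero_def)

lemma vneg_in_Vsp: "p > 0 \<Longrightarrow> x \<in> Vsp p n \<Longrightarrow> vneg p x \<in> Vsp p n"
  by (simp add: Vsp_def vneg_def)

lemma vneg_vzero [simp]: "vneg p vzero = vzero"
  by (simp add: vneg_def vzero_def)

lemma vneg_vneg:
  assumes "p > 0" "x \<in> Vsp p n"
  shows "vneg p (vneg p x) = x"
proof
  fix i
  have "0 \<le> x i \<and> x i < p" using assms unfolding Vsp_def by (cases "i < n") auto
  thus "vneg p (vneg p x) i = x i"
    by (simp add: vneg_def mod_minus_eq)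
qed

lemma vneg_neq_self:
  assumes "odd p" "p > 0" "x \<in> Vsp p n" "x \<noteq> vzero"
  shows "vneg p x \<noteq> x"
proof
  assume fixed: "vneg p x = x"
  have "x i = 0" for i
  proof -
    have range: "0 \<le> x i \<and> x i < p" using assms(2,3) unfolding Vsp_def by (cases "i < n") auto
    have "(- x i) mod p = x i mod p"
      using fun_cong[OF fixed, of i] range by (simp add: vneg_def)
    hence "p dvd (- x i) - x i"
      by (simp only: mod_eq_dvd_iff)
    moreover have "2 * x i = - ((- x i) - x i)"
      by simp
    ultimately have "p dvd 2 * x i"
      by (simp only: dvd_minus_iff)
    moreover have "coprime p 2"
      using assms(1) by (simp add: coprime_commute)
    ultimately have "p dvd x i"
      by (simp add: coprime_dvd_mult_right_iff)
    thus "x i = 0" using range zdvd_imp_le[of p "x i"] by fastforce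
  qed
  thus False using assms(4) by (auto simp: vzero_def)
qed

lemma even_card_punctured_level_set:
  assumes "odd p" "p > 0" "\<forall>x\<in>Vsp p n. g x = g (vneg p x)"
  shows "even (card {x\<in>Vsp p n - {vzero}. g x = t})"
proof (rule even_card_involution[where g = "vneg p"])
  show "finite {x\<in>Vsp p n - {vzero}. g x = t}"
    using Vsp_finite by simp
  show "\<forall>x\<in>{x\<in>Vsp p n - {vzero}. g x = t}. vneg p x \<in> {x\<in>Vsp p n - {vzero}. g x = t} \<and>
      vneg p (vneg p x) = x \<and> vneg p x \<noteq> x"
  proof
    fix x assume "x \<in> {x\<in>Vsp p n - {vzero}. g x = t}"
    hence x: "x \<in> Vsp p n" "x \<noteq> vzero" "g x = t" by auto
    have "vneg p x \<noteq> vzero"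
      using vneg_vneg[OF assms(2) x(1)] x(2) by auto
    moreover have "g (vneg p x) = g x"
      using assms(3) x(1) by metis
    ultimately show "vneg p x \<in> {x\<in>Vsp p n - {vzero}. g x = t} \<and> vneg p (vneg p x) = x \<and> vneg p x \<noteq> x"
      using x assms(1,2) vneg_in_Vsp vneg_vneg vneg_neq_self by simp
  qed
qed

lemma walsh_vzero: "walsh p n M f vzero = (\<Sum>x\<in>Vsp p n. xi p (f x))"
  by (simp add: walsh_def bform_def vzero_def)

lemma plat_mag_pos: "p > 0 \<Longrightarrow> plat_mag p n s > 0"
  by (simp add: plat_mag_def)

lemma plat_mag_square:
  assumes "p \<ge> 0"
  shows "(plat_mag p n s)\<^sup>2 = of_int p ^ (n + s)"
proof -
  have "(plat_mag p n s)\<^sup>2 = (sqrt (of_int p) ^ 2) ^ (n + s)"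
    unfolding plat_mag_def by (simp only: power_mult[symmetric] mult.commute)
  thus ?thesis using assms by simp
qed

lemma mu_neq_0: "mu p n s \<noteq> 0"
  by (simp add: mu_def)

lemma mu_square:
  assumes "d\<^sup>2 = 1" "(d * p ^ (n + s)) mod 4 = 1"
  shows "(mu p n s)\<^sup>2 = of_int d"
proof -
  define P where "P = p ^ (n + s)"
  have "d = 1 \<or> d = -1" using assms(1) by (simp add: power2_eq_1_iff)
  thus ?thesis
  proof
    assume "d = 1"
    thus ?thesis using assms(2) by (simp add: mu_def)
  next
    assume "d = -1"
    hence "(- P) mod 4 = 1" using assms(2) by (simp add: P_def)
    hence "P mod 4 \<noteq> 1" by presburger
    thus ?thesis using \<open>d = -1\<close> by (simp add: mu_def P_def)
  qed
qed

context odd_prime_cyclotomic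
begin

lemma walsh_vzero_eq_1_plus_2_cyc_int:
  assumes range: "\<forall>x\<in>Vsp (int q) n. 0 \<le> f x \<and> f x < int q"
    and f0: "f vzero = 0" and even_f: "\<forall>x\<in>Vsp (int q) n. f x = f (vneg (int q) x)"
  shows "\<exists>w. cyc_int w \<and> walsh (int q) n M f vzero = 1 + 2 * w"
proof -
  define V where "V = Vsp (int q) n"
  define A where "A = V - {vzero}"
  define N where "N t = card {x\<in>A. nat (f x) = t}" for t
  have "vzero \<in> V" using q_pos by (simp add: V_def vzero_in_Vsp)
  have "walsh (int q) n M f vzero = (\<Sum>x\<in>V. zeta ^ nat (f x))"
    unfolding walsh_vzero V_def using range by (intro sum.cong refl) (simp add: xi_eq_zeta_pow)
  also have "\<dots> = 1 + (\<Sum>x\<in>A. zeta ^ nat (f x))"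
    using \<open>vzero \<in> V\<close> f0 Vsp_finite unfolding A_def V_def by (simp add: sum.remove)
  also have "(\<Sum>x\<in>A. zeta ^ nat (f x)) = cyc_eval 1 (\<lambda>t. int (N t))"
    unfolding N_def using range Vsp_finite by (intro sum_zeta_pow_eq_cyc_eval) (auto simp: A_def V_def)
  also have "\<dots> = 2 * cyc_eval 1 (\<lambda>t. int (N t) div 2)"
  proof -
    have "\<forall>x\<in>Vsp (int q) n. nat (f x) = nat (f (vneg (int q) x))"
      using even_f by metis
    hence "even (N t)" for t
      unfolding N_def A_def V_def using q_pos odd_q by (intro even_card_punctured_level_set) auto
    hence "(\<lambda>t. int (N t)) = (\<lambda>t. 2 * (int (N t) div 2))"
      by (auto simp: fun_eq_iff elim!: evenE)
    thus ?thesis by (simp only: cyc_eval_scale) simp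
  qed
  finally show ?thesis by blast
qed

lemma dual_eqI:
  assumes c: "0 \<le> c" "c < int q" and \<epsilon>: "\<epsilon> = 1 \<or> \<epsilon> = -1"
    and walsh: "walsh (int q) n M f \<alpha> = of_int \<epsilon> * mu (int q) n s * of_real (plat_mag (int q) n s) * xi (int q) c"
  shows "dual (int q) n M s f \<alpha> = c"
  unfolding dual_def
proof (rule the_equality)
  show "0 \<le> c \<and> c < int q \<and> (\<exists>\<epsilon>::int. (\<epsilon> = 1 \<or> \<epsilon> = -1) \<and>
      walsh (int q) n M f \<alpha> = of_int \<epsilon> * mu (int q) n s * of_real (plat_mag (int q) n s) * xi (int q) c)"
    using c \<epsilon> walsh by blast
next
  fix c' assume "0 \<le> c' \<and> c' < int q \<and> (\<exists>\<epsilon>'::int. (\<epsilon>' = 1 \<or> \<epsilon>' = -1) \<and>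
      walsh (int q) n M f \<alpha> = of_int \<epsilon>' * mu (int q) n s * of_real (plat_mag (int q) n s) * xi (int q) c')"
  then obtain \<epsilon>' where c': "0 \<le> c'" "c' < int q" "\<epsilon>' = 1 \<or> \<epsilon>' = -1"
    and walsh': "walsh (int q) n M f \<alpha> = of_int \<epsilon>' * mu (int q) n s * of_real (plat_mag (int q) n s) * xi (int q) c'"
    by blast
  have "mu (int q) n s * of_real (plat_mag (int q) n s) \<noteq> 0"
    using mu_neq_0[of "int q" n s] plat_mag_pos[of "int q" n s] q_pos by simp
  hence "of_int \<epsilon> * zeta ^ nat c = of_int \<epsilon>' * zeta ^ nat c'"
    using walsh walsh' c c' by (simp add: xi_eq_zeta_pow mult_ac)
  hence "nat c = nat c'"
    using sign_zeta_pow_inj c c' \<epsilon> c'(3) by (auto simp: power2_eq_1_iff)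
  thus "c' = c" using c c' by simp
qed

lemma walsh_vzero_eq_sign_mu_plat_mag:
  assumes range: "\<forall>x\<in>Vsp (int q) n. 0 \<le> f x \<and> f x < int q"
    and plat: "plateaued (int q) n M s f" and f0: "f vzero = 0"
    and even_f: "\<forall>x\<in>Vsp (int q) n. f x = f (vneg (int q) x)"
  shows "\<exists>\<epsilon>::int. (\<epsilon> = 1 \<or> \<epsilon> = -1) \<and>
    walsh (int q) n M f vzero = of_int \<epsilon> * mu (int q) n s * of_real (plat_mag (int q) n s)"
proof -
  define \<beta> P where "\<beta> = walsh (int q) n M f vzero" and "P = plat_mag (int q) n s"
  obtain w where w: "cyc_int w" "\<beta> = 1 + 2 * w"
    using walsh_vzero_eq_1_plus_2_cyc_int[OF range f0 even_f] unfolding \<beta>_def by blast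
  have "vzero \<in> Vsp (int q) n"
    using q_pos by (simp add: vzero_in_Vsp)
  hence "cmod \<beta> = 0 \<or> cmod \<beta> = P"
    using plat unfolding plateaued_def \<beta>_def P_def by blast
  hence "cmod \<beta> = P"
    using one_plus_two_cyc_int_neq_0[OF w(1)] w(2) by auto
  hence "\<beta> * cnj \<beta> = of_real (P\<^sup>2)"
    by (simp flip: complex_norm_square)
  also have "P\<^sup>2 = real q ^ (n + s)"
    unfolding P_def by (simp add: plat_mag_square)
  finally obtain d where d: "d\<^sup>2 = 1" "\<beta>\<^sup>2 = of_int (d * int q ^ (n + s))" "(d * int q ^ (n + s)) mod 4 = 1"
    using square_of_odd_elem_of_norm_q_pow[OF w(1)] unfolding w(2) by auto
  have "(of_real P :: complex)\<^sup>2 = of_real (P\<^sup>2)"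
    by simp
  also have "\<dots> = of_nat q ^ (n + s)"
    unfolding P_def by (simp add: plat_mag_square)
  finally have "\<beta>\<^sup>2 = (mu (int q) n s * of_real P)\<^sup>2"
    using d mu_square[OF d(1) d(3)] by (simp add: power_mult_distrib)
  thus ?thesis
    using sign_if_square_eq unfolding \<beta>_def P_def by (simp add: mult.assoc)
qed

end

theorem lemma7:
  fixes p :: int and n s :: nat and M :: "nat \<Rightarrow> nat \<Rightarrow> int"
    and f :: "(nat \<Rightarrow> int) \<Rightarrow> int"
  assumes "prime p" and "odd p"
    and "symmetric_nondeg_form p n M"
    and "\<forall>x\<in>Vsp p n. 0 \<le> f x \<and> f x < p"
    and "plateaued p n M s f"
    and "f vzero = 0"
    and "\<forall>x\<in>Vsp p n. f x = f (vneg p x)"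
  shows "vzero \<in> walsh_supp p n M s f \<and> dual p n M s f vzero = 0"
proof -
  \<comment> \<open>The form only enters through \<open>bform p n M vzero = 0\<close>, so it need not be non-degenerate.\<close>
  have "p > 0" using prime_gt_0_int[OF assms(1)] .
  hence p: "int (nat p) = p" by simp
  interpret odd_prime_cyclotomic "nat p"
    using assms(1,2) \<open>p > 0\<close> by unfold_locales (auto simp: even_nat_iff)
  obtain \<epsilon> :: int where \<epsilon>: "\<epsilon> = 1 \<or> \<epsilon> = -1"
    and walsh: "walsh p n M f vzero = of_int \<epsilon> * mu p n s * of_real (plat_mag p n s)"
    using walsh_vzero_eq_sign_mu_plat_mag[of n f M s] assms(4-7) unfolding p by blast
  have "cmod (walsh p n M f vzero) = plat_mag p n s"
    using \<epsilon> plat_mag_pos[OF \<open>p > 0\<close>, of n s] by (auto simp: walsh norm_mult mu_def)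
  hence "vzero \<in> walsh_supp p n M s f"
    using vzero_in_Vsp[OF \<open>p > 0\<close>, of n] by (simp add: walsh_supp_def)
  moreover have "dual p n M s f vzero = 0"
    using dual_eqI[of 0 \<epsilon> n M f vzero s] \<epsilon> walsh q_pos unfolding p by (simp add: xi_def)
  ultimately show ?thesis ..
qed

end
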